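(* The map $\Phi$ from labelled red and white trees to formal fractions is injective: for every $n$, $\Phi:\mathrm{RW}(n)\to\mathcal{FF}(n)$ is injective.
   Context: $\mathrm{RW}(n)$: finite rooted trees (children unordered) whose nodes $z$ carry possibly empty label sets $L(z)\subseteq[n]$ partitioning $[n]$, every empty node having at least two children; a labelled node is white, an empty node is red iff all its children are white, white otherwise. $\mathcal{FF}(n)$: reduced formal fractions whose numerator and denominator are products of symbols $[S]$, $\emptyset\ne S\subseteq[n]$ (free abelian group on these symbols). For a node $z$ of $T$, let $S(z)$ be the union of the label sets of all nodes in the subtree rooted at $z$, and let $E(z)=1/[S(z)]$ if $z$ is white, $E(z)=[S(z)]$ if $z$ is red and not the root, $E(z)=1$ if $z$ is red and the root. Then $\Phi(T)=\prod_{z}E(z)$ over all nodes $z$ of $T$. *)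

theory Defs
  imports Main "HOL-Library.Multiset"
begin

datatype rtree = Node (labels: "nat set") (kids: "rtree multiset")

primrec nodes :: "rtree \<Rightarrow> rtree multiset" where
  "nodes (Node L C) = {# Node L C #} + sum_mset (image_mset nodes C)"

primrec subtree_labels :: "rtree \<Rightarrow> nat set" where
  "subtree_labels (Node L C) = L \<union> \<Union> (set_mset (image_mset subtree_labels C))"

primrec is_red :: "rtree \<Rightarrow> bool" where
  "is_red (Node L C) = (L = {} \<and> True \<notin># image_mset is_red C)"

abbreviation is_white :: "rtree \<Rightarrow> bool" where
  "is_white z \<equiv> \<not> is_red z"

definition RW :: "nat \<Rightarrow> rtree set" where
  "RW n = {T. (\<forall>z \<in># nodes T. labels z \<subseteq> {1..n})
             \<and> (\<forall>i \<in> {1..n}. size (filter_mset (\<lambda>z. i \<in> labels z) (nodes T)) = 1)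
             \<and> (\<forall>z \<in># nodes T. labels z = {} \<longrightarrow> size (kids z) \<ge> 2)}"

text \<open>Elements of the free abelian group on the symbols [S] are represented by
their exponent vectors: a function assigning to each S the (integer) exponent of [S]
in the reduced fraction (numerator exponents positive, denominator negative).\<close>
type_synonym frac = "nat set \<Rightarrow> int"

definition FF :: "nat \<Rightarrow> frac set" where
  "FF n = {f. \<forall>S. f S \<noteq> 0 \<longrightarrow> S \<noteq> {} \<and> S \<subseteq> {1..n}}"

definition gen_sym :: "nat set \<Rightarrow> frac" where
  "gen_sym S = (\<lambda>X. if X = S then 1 else 0)"

text \<open>Contribution of all nodes of the subtree at z, z itself treated as a non-root:
white nodes give 1/[S(z)], red non-root nodes give [S(z)].\<close>
primrec phi_nonroot :: "rtree \<Rightarrow> frac" where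
  "phi_nonroot (Node L C) = (\<lambda>X.
      (if is_red (Node L C) then 1 else -1) * gen_sym (subtree_labels (Node L C)) X
      + sum_mset (image_mset (\<lambda>f. f X) (image_mset phi_nonroot C)))"

definition Phi :: "rtree \<Rightarrow> frac" where
  "Phi T = (\<lambda>X.
      (if is_red T then 0 else - gen_sym (subtree_labels T) X)
      + sum_mset (image_mset (\<lambda>c. phi_nonroot c X) (kids T)))"

end

theory Submission
  imports Defs
begin

text \<open>In a tree of RW(n) every label occurs once and every empty node branches, so the sets
S(z) of distinct nodes are distinct and form a laminar family, the clusters of the tree.
Each cluster other than S(root) = [n] occurs in exactly one factor E(z) of \<open>\<Phi>(T)\<close>, with
exponent \<open>\<plusminus>1\<close>, so it survives reduction; hence the support of \<open>\<Phi>(T)\<close> together with [n]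
is the cluster family. The tree is recovered from its clusters: the children of the root
carry the maximal proper clusters, the root carries the labels they miss, and induction
applies to the clusters below each child.\<close>

definition label_count :: "nat \<Rightarrow> rtree \<Rightarrow> nat" where
  "label_count i t = size (filter_mset (\<lambda>z. i \<in> labels z) (nodes t))"

lemma size_filter_mset_sum_mset:
  "size (filter_mset P (\<Sum>c\<in>#C. f c)) = (\<Sum>c\<in>#C. size (filter_mset P (f c)))"
  by (induction C) auto

lemma label_count_Node:
  "label_count i (Node L C) = (if i \<in> L then 1 else 0) + (\<Sum>c\<in>#C. label_count i c)"
  unfolding label_count_def by (simp add: size_filter_mset_sum_mset)

lemma label_count_pos_iff: "0 < label_count i t \<longleftrightarrow> i \<in> subtree_labels t"
proof (induction t)
  case (Node L C)
  have "0 < (\<Sum>c\<in>#C. label_count i c) \<longleftrightarrow> (\<exists>c\<in>#C. 0 < label_count i c)"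
    by (induction C) auto
  then show ?case using Node by (auto simp: label_count_Node)
qed

lemma sum_mset_image_remove:
  "x \<in># A \<Longrightarrow> (\<Sum>y\<in>#A. f y) = f x + (\<Sum>y\<in>#A - {#x#}. f y)"
  by (metis insert_DiffM sum_mset.insert)

lemma label_count_kid_le: "c \<in># C \<Longrightarrow> label_count i c \<le> label_count i (Node L C)"
  by (simp add: label_count_Node sum_mset.remove[of "label_count i c"])

lemma nodes_self: "t \<in># nodes t"
  by (cases t) auto

lemma nodes_kid: "c \<in># C \<Longrightarrow> z \<in># nodes c \<Longrightarrow> z \<in># nodes (Node L C)"
  by (auto simp: in_Union_mset_iff)

text \<open>The defining conditions of RW(n) without the ground set [n], so that they pass to subtrees.\<close>
definition proper :: "rtree \<Rightarrow> bool" where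
  "proper t \<longleftrightarrow> (\<forall>i. label_count i t \<le> 1) \<and> (\<forall>z\<in>#nodes t. labels z = {} \<longrightarrow> 2 \<le> size (kids z))"

lemma RW_proper:
  assumes T: "T \<in> RW n"
  shows "proper T" and "subtree_labels T = {1..n}"
proof -
  have in_range: "label_count i T = 1" if "i \<in> {1..n}" for i
    using T that unfolding RW_def label_count_def by blast
  have off_range: "label_count i T = 0" if "i \<notin> {1..n}" for i
  proof -
    have "\<forall>z\<in>#nodes T. i \<notin> labels z" using T that unfolding RW_def by blast
    then show ?thesis unfolding label_count_def by (simp add: filter_mset_eq_mempty_iff)
  qed
  have "label_count i T \<le> 1" for i
    using in_range off_range by (cases "i \<in> {1..n}") auto
  then show "proper T"
    using T unfolding proper_def RW_def by blast
  show "subtree_labels T = {1..n}"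
  proof (intro set_eqI)
    show "i \<in> subtree_labels T \<longleftrightarrow> i \<in> {1..n}" for i
      using in_range off_range label_count_pos_iff[of i T] by (cases "i \<in> {1..n}") auto
  qed
qed

lemma proper_kid: "proper (Node L C) \<Longrightarrow> c \<in># C \<Longrightarrow> proper c"
  unfolding proper_def using label_count_kid_le nodes_kid order_trans by blast

lemma proper_empty_root: "proper (Node L C) \<Longrightarrow> L = {} \<Longrightarrow> 2 \<le> size C"
  unfolding proper_def using nodes_self[of "Node L C"] by fastforce

lemma subtree_labels_nonempty: "proper t \<Longrightarrow> subtree_labels t \<noteq> {}"
proof (induction t)
  case (Node L C)
  show ?case
  proof (cases "L = {}")
    case True
    then obtain c where "c \<in># C"
      using proper_empty_root Node.prems by fastforce
    then show ?thesis using Node proper_kid by fastforce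
  qed auto
qed

lemma proper_kids_disjoint:
  assumes P: "proper (Node L C)" and c: "c \<in># C" and d: "d \<in># C - {#c#}"
  shows "subtree_labels c \<inter> subtree_labels d = {}"
proof (rule ccontr)
  assume "subtree_labels c \<inter> subtree_labels d \<noteq> {}"
  then obtain i where "0 < label_count i c" "0 < label_count i d"
    using label_count_pos_iff by blast
  moreover have "label_count i c + label_count i d \<le> (\<Sum>e\<in>#C. label_count i e)"
    using sum_mset_image_remove[OF c, of "label_count i"] sum_mset_image_remove[OF d, of "label_count i"]
    by linarith
  moreover have "(\<Sum>e\<in>#C. label_count i e) \<le> 1"
    using P unfolding proper_def by (metis label_count_Node le_add2 order_trans)
  ultimately show False by linarith
qed

lemma proper_root_labels_disjoint:
  assumes P: "proper (Node L C)" and c: "c \<in># C"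
  shows "L \<inter> subtree_labels c = {}"
proof (rule ccontr)
  assume "L \<inter> subtree_labels c \<noteq> {}"
  then obtain i where i: "i \<in> L" "0 < label_count i c"
    using label_count_pos_iff by blast
  have "label_count i (Node L C) = 1 + (\<Sum>e\<in>#C. label_count i e)"
    using i by (simp add: label_count_Node)
  moreover have "label_count i c \<le> (\<Sum>e\<in>#C. label_count i e)"
    by (simp add: c sum_mset.remove[of "label_count i c"])
  moreover have "label_count i (Node L C) \<le> 1"
    using P unfolding proper_def by blast
  ultimately show False using i by linarith
qed

lemma proper_kids_distinct_disjoint:
  "proper (Node L C) \<Longrightarrow> c \<in># C \<Longrightarrow> d \<in># C \<Longrightarrow> c \<noteq> d \<Longrightarrow> subtree_labels c \<inter> subtree_labels d = {}"
  by (simp add: proper_kids_disjoint in_diff_count)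

lemma proper_kids_count_le_1:
  assumes P: "proper (Node L C)"
  shows "count C c \<le> 1"
proof (rule ccontr)
  assume "\<not> count C c \<le> 1"
  then have c': "c \<in># C - {#c#}"
    by (simp add: in_diff_count)
  then have c: "c \<in># C"
    by (rule in_diffD)
  have "subtree_labels c = {}"
    using proper_kids_disjoint[OF P c c'] by simp
  then show False
    using subtree_labels_nonempty[OF proper_kid[OF P c]] by contradiction
qed

primrec clusters :: "rtree \<Rightarrow> nat set set" where
  "clusters (Node L C) = insert (subtree_labels (Node L C)) (\<Union> (set_mset (image_mset clusters C)))"

lemma subtree_labels_in_clusters: "subtree_labels t \<in> clusters t"
  by (cases t) simp

lemma clusters_subset: "X \<in> clusters t \<Longrightarrow> X \<subseteq> subtree_labels t"
  by (induction t arbitrary: X) fastforce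

lemma clusters_nonempty: "proper t \<Longrightarrow> X \<in> clusters t \<Longrightarrow> X \<noteq> {}"
  by (induction t arbitrary: X) (use proper_kid subtree_labels_nonempty in fastforce)

lemma subtree_labels_kid_neq:
  assumes P: "proper (Node L C)" and c: "c \<in># C"
  shows "subtree_labels c \<noteq> subtree_labels (Node L C)"
proof
  assume eq: "subtree_labels c = subtree_labels (Node L C)"
  have "L \<subseteq> subtree_labels c"
    unfolding eq by auto
  then have "L = {}"
    using proper_root_labels_disjoint[OF P c] by blast
  moreover have "size C = Suc (size (C - {#c#}))"
    using c by (metis insert_DiffM size_add_mset)
  ultimately have "C - {#c#} \<noteq> {#}"
    using proper_empty_root[OF P] by auto
  then obtain d where d: "d \<in># C - {#c#}"
    by blast
  then have d_in: "d \<in># C"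
    by (rule in_diffD)
  then have "subtree_labels d \<subseteq> subtree_labels c"
    unfolding eq by auto
  moreover have "subtree_labels c \<inter> subtree_labels d = {}"
    using proper_kids_disjoint[OF P c d] .
  moreover have "subtree_labels d \<noteq> {}"
    using subtree_labels_nonempty[OF proper_kid[OF P d_in]] .
  ultimately show False
    by blast
qed

lemma subtree_labels_notin_kid_clusters:
  assumes P: "proper (Node L C)" and c: "c \<in># C"
  shows "subtree_labels (Node L C) \<notin> clusters c"
proof
  assume "subtree_labels (Node L C) \<in> clusters c"
  then have "subtree_labels (Node L C) \<subseteq> subtree_labels c"
    by (rule clusters_subset)
  moreover have "subtree_labels c \<subseteq> subtree_labels (Node L C)"
    using c by auto
  ultimately show False
    using subtree_labels_kid_neq[OF P c] by blast
qed

lemma clusters_kid: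
  assumes P: "proper (Node L C)" and c: "c \<in># C"
  shows "clusters c = {X \<in> clusters (Node L C). X \<subseteq> subtree_labels c}"
proof (intro equalityI subsetI)
  show "X \<in> {X \<in> clusters (Node L C). X \<subseteq> subtree_labels c}" if "X \<in> clusters c" for X
    using that c clusters_subset by auto
next
  fix X assume "X \<in> {X \<in> clusters (Node L C). X \<subseteq> subtree_labels c}"
  then have X: "X \<in> clusters (Node L C)" "X \<subseteq> subtree_labels c"
    by auto
  then have "X \<noteq> subtree_labels (Node L C)"
    using subtree_labels_kid_neq[OF P c] c by auto
  then obtain d where d: "d \<in># C" "X \<in> clusters d"
    using X by auto
  show "X \<in> clusters c"
  proof (rule ccontr)
    assume "X \<notin> clusters c"
    then have "subtree_labels c \<inter> subtree_labels d = {}"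
      using proper_kids_distinct_disjoint[OF P c d(1)] d(2) by blast
    moreover have "X \<subseteq> subtree_labels d" "X \<noteq> {}"
      using clusters_subset[OF d(2)] clusters_nonempty[OF proper_kid[OF P d(1)] d(2)] .
    ultimately show False
      using X(2) by blast
  qed
qed

lemma Union_clusters: "\<Union> (clusters t) = subtree_labels t"
  using clusters_subset subtree_labels_in_clusters by blast

definition maximal_proper_members :: "'a set set \<Rightarrow> 'a set set" where
  "maximal_proper_members F = {X \<in> F - {\<Union> F}. \<forall>Y \<in> F - {\<Union> F}. X \<subseteq> Y \<longrightarrow> Y = X}"

lemma kid_labels_eq_maximal_proper_clusters:
  assumes P: "proper (Node L C)"
  shows "subtree_labels ` set_mset C = maximal_proper_members (clusters (Node L C))"
proof (intro equalityI subsetI)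
  fix X assume "X \<in> subtree_labels ` set_mset C"
  then obtain c where c: "c \<in># C" and X: "X = subtree_labels c"
    by blast
  have "X \<noteq> {}"
    using subtree_labels_nonempty[OF proper_kid[OF P c]] X by simp
  have "Y = X" if Y: "Y \<in> clusters (Node L C) - {subtree_labels (Node L C)}" "X \<subseteq> Y" for Y
  proof -
    obtain d where d: "d \<in># C" "Y \<in> clusters d"
      using Y(1) by auto
    then have "Y \<subseteq> subtree_labels d"
      by (simp add: clusters_subset)
    then have "d = c"
      using proper_kids_distinct_disjoint[OF P c d(1)] \<open>X \<noteq> {}\<close> X Y(2) by blast
    then show "Y = X"
      using clusters_subset[OF d(2)] X Y(2) by blast
  qed
  moreover have "X \<in> clusters (Node L C) - {subtree_labels (Node L C)}"
    using c X subtree_labels_in_clusters subtree_labels_kid_neq[OF P c] by fastforce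
  ultimately show "X \<in> maximal_proper_members (clusters (Node L C))"
    unfolding maximal_proper_members_def Union_clusters by blast
next
  fix X assume "X \<in> maximal_proper_members (clusters (Node L C))"
  then have X: "X \<in> clusters (Node L C) - {subtree_labels (Node L C)}"
    and max: "\<forall>Y \<in> clusters (Node L C) - {subtree_labels (Node L C)}. X \<subseteq> Y \<longrightarrow> Y = X"
    unfolding maximal_proper_members_def Union_clusters by auto
  then obtain d where d: "d \<in># C" "X \<in> clusters d"
    by auto
  have "subtree_labels d \<in> clusters (Node L C) - {subtree_labels (Node L C)}"
    using d(1) subtree_labels_in_clusters subtree_labels_kid_neq[OF P d(1)] by fastforce
  then have "subtree_labels d = X"
    using max clusters_subset[OF d(2)] by blast
  then show "X \<in> subtree_labels ` set_mset C"
    using d(1) by blast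
qed

lemma proper_root_labels:
  "proper (Node L C) \<Longrightarrow> L = subtree_labels (Node L C) - \<Union> (subtree_labels ` set_mset C)"
  using proper_root_labels_disjoint by auto

lemma multiset_eq_if_set_mset_eq:
  assumes "set_mset A = set_mset B" and "\<And>x. count A x \<le> 1" and "\<And>x. count B x \<le> 1"
  shows "A = B"
proof (rule multiset_eqI)
  fix x
  have "count A x = 0 \<longleftrightarrow> count B x = 0"
    using assms(1) by (metis count_eq_zero_iff)
  then show "count A x = count B x"
    using assms(2,3)[of x] by linarith
qed

lemma image_eq_imp_eq_if_inj_between:
  assumes "f ` A = f ` B" and "\<And>a b. a \<in> A \<Longrightarrow> b \<in> B \<Longrightarrow> f a = f b \<Longrightarrow> a = b"
  shows "A = B"
  using assms by (smt (verit) equalityI image_iff subsetI)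

lemma proper_clusters_inj:
  "proper t1 \<Longrightarrow> proper t2 \<Longrightarrow> clusters t1 = clusters t2 \<Longrightarrow> t1 = t2"
proof (induction t1 arbitrary: t2)
  case (Node L1 C1)
  obtain L2 C2 where t2: "t2 = Node L2 C2"
    by (cases t2)
  have P1: "proper (Node L1 C1)" and P2: "proper (Node L2 C2)"
    and F: "clusters (Node L1 C1) = clusters (Node L2 C2)"
    using Node.prems t2 by auto
  have S: "subtree_labels (Node L1 C1) = subtree_labels (Node L2 C2)"
    using F by (metis Union_clusters)
  have K: "subtree_labels ` set_mset C1 = subtree_labels ` set_mset C2"
    using F by (simp only: kid_labels_eq_maximal_proper_clusters[OF P1] kid_labels_eq_maximal_proper_clusters[OF P2])
  have same_kid: "c1 = c2"
    if c1: "c1 \<in># C1" and c2: "c2 \<in># C2" and eq: "subtree_labels c1 = subtree_labels c2" for c1 c2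
  proof -
    have "clusters c1 = clusters c2"
      by (simp only: clusters_kid[OF P1 c1] clusters_kid[OF P2 c2] F eq)
    then show ?thesis
      using Node.IH[OF c1] proper_kid[OF P1 c1] proper_kid[OF P2 c2] by blast
  qed
  have "set_mset C1 = set_mset C2"
    using K same_kid by (rule image_eq_imp_eq_if_inj_between)
  then have "C1 = C2"
    using multiset_eq_if_set_mset_eq proper_kids_count_le_1 P1 P2 by blast
  moreover have "L1 = L2"
    using proper_root_labels[OF P1] proper_root_labels[OF P2] S \<open>C1 = C2\<close> by metis
  ultimately show ?case
    using t2 by simp
qed

lemma sum_phi_nonroot_kids_nonzero_iff:
  assumes P: "proper (Node L C)"
    and IH: "\<And>c X. c \<in># C \<Longrightarrow> phi_nonroot c X \<noteq> 0 \<longleftrightarrow> X \<in> clusters c"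
  shows "(\<Sum>c\<in>#C. phi_nonroot c X) \<noteq> 0 \<longleftrightarrow> (\<exists>c\<in>#C. X \<in> clusters c)"
proof (cases "\<exists>c\<in>#C. X \<in> clusters c")
  case False
  then have "\<forall>c\<in>#C. phi_nonroot c X = 0"
    using IH by blast
  then have "(\<Sum>c\<in>#C. phi_nonroot c X) = 0"
    by (intro sum_mset.neutral) auto
  then show ?thesis
    using False by simp
next
  case True
  then obtain c where c: "c \<in># C" "X \<in> clusters c"
    by blast
  obtain C' where C: "C = add_mset c C'"
    using multi_member_split[OF c(1)] by blast
  have "phi_nonroot d X = 0" if d: "d \<in># C'" for d
  proof -
    have "X \<subseteq> subtree_labels c" "X \<noteq> {}"
      using clusters_subset[OF c(2)] clusters_nonempty[OF proper_kid[OF P c(1)] c(2)] .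
    then have "X \<notin> clusters d"
      using proper_kids_disjoint[OF P c(1)] d C clusters_subset by fastforce
    moreover have "d \<in># C"
      using d C by simp
    ultimately show ?thesis
      using IH by blast
  qed
  then have "(\<Sum>c\<in>#C. phi_nonroot c X) = phi_nonroot c X"
    unfolding C by (simp add: sum_mset.neutral)
  then show ?thesis
    using IH[OF c(1)] c by auto
qed

lemma phi_nonroot_nonzero_iff: "proper t \<Longrightarrow> phi_nonroot t X \<noteq> 0 \<longleftrightarrow> X \<in> clusters t"
proof (induction t arbitrary: X)
  case (Node L C)
  have kids: "(\<Sum>c\<in>#C. phi_nonroot c X) \<noteq> 0 \<longleftrightarrow> (\<exists>c\<in>#C. X \<in> clusters c)"
    using sum_phi_nonroot_kids_nonzero_iff Node proper_kid by blast
  show ?case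
  proof (cases "X = subtree_labels (Node L C)")
    case True
    then have "\<not> (\<exists>c\<in>#C. X \<in> clusters c)"
      using subtree_labels_notin_kid_clusters[OF Node.prems] by blast
    with True kids show ?thesis
      by (simp add: gen_sym_def image_mset.compositionality o_def del: subtree_labels.simps is_red.simps)
  next
    case False
    with kids show ?thesis
      by (simp add: gen_sym_def image_mset.compositionality o_def del: subtree_labels.simps is_red.simps)
  qed
qed

lemma Phi_support:
  assumes P: "proper T"
  shows "insert (subtree_labels T) {X. Phi T X \<noteq> 0} = clusters T"
proof -
  obtain L C where T: "T = Node L C"
    by (cases T)
  have P': "proper (Node L C)"
    using P T by simp
  have support: "Phi T X \<noteq> 0 \<longleftrightarrow> X \<in> clusters T" if X: "X \<noteq> subtree_labels T" for X
  proof -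
    have "Phi T X = (\<Sum>c\<in>#C. phi_nonroot c X)"
      using X by (simp add: Phi_def gen_sym_def T del: subtree_labels.simps)
    moreover have "X \<in> clusters T \<longleftrightarrow> (\<exists>c\<in>#C. X \<in> clusters c)"
      using X unfolding T by (simp del: subtree_labels.simps)
    moreover have "(\<Sum>c\<in>#C. phi_nonroot c X) \<noteq> 0 \<longleftrightarrow> (\<exists>c\<in>#C. X \<in> clusters c)"
      by (rule sum_phi_nonroot_kids_nonzero_iff[OF P' phi_nonroot_nonzero_iff[OF proper_kid[OF P']]])
    ultimately show ?thesis
      by simp
  qed
  show ?thesis
  proof (rule set_eqI)
    show "X \<in> insert (subtree_labels T) {X. Phi T X \<noteq> 0} \<longleftrightarrow> X \<in> clusters T" for X
      using support[of X] subtree_labels_in_clusters[of T] by (cases "X = subtree_labels T") auto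
  qed
qed

theorem mainTheorem9:
  fixes n :: nat
  shows "Phi ` RW n \<subseteq> FF n \<and> inj_on Phi (RW n)"
proof
  show "Phi ` RW n \<subseteq> FF n"
  proof
    fix f assume "f \<in> Phi ` RW n"
    then obtain T where T: "T \<in> RW n" and f: "f = Phi T"
      by blast
    have "S \<noteq> {} \<and> S \<subseteq> {1..n}" if S: "Phi T S \<noteq> 0" for S
    proof -
      have "S \<in> clusters T"
        using S Phi_support[OF RW_proper(1)[OF T]] by blast
      then show ?thesis
        using clusters_nonempty[OF RW_proper(1)[OF T]] clusters_subset RW_proper(2)[OF T] by blast
    qed
    then show "f \<in> FF n"
      unfolding FF_def f by blast
  qed
  show "inj_on Phi (RW n)"
  proof (rule inj_onI)
    fix T1 T2 assume T1: "T1 \<in> RW n" and T2: "T2 \<in> RW n" and eq: "Phi T1 = Phi T2"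
    have "clusters T1 = clusters T2"
      using Phi_support[OF RW_proper(1)[OF T1]] Phi_support[OF RW_proper(1)[OF T2]]
      by (simp add: eq RW_proper(2)[OF T1] RW_proper(2)[OF T2])
    then show "T1 = T2"
      using proper_clusters_inj RW_proper(1)[OF T1] RW_proper(1)[OF T2] by blast
  qed
qed

end
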